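(* Let $d\geq 2$ and let $u,v\in\mathcal M_d$ with $u\geq_{lex}v$ and $x_1\mid u$ be such that $I=(\mathcal L(u,v))\subset S$ is a completely lexsegment ideal which is not an initial lexsegment ideal. Let $j$ be the exponent of $x_n$ in $v$ and let $a=|\mathcal M_d\setminus\mathcal L^i(u)|$. Then $I$ is a Gotzmann ideal if and only if $$a\geq \binom{n+d-1}{d}-(j+1).$$
   Context: $k$ is a field, $S=k[x_1,\ldots,x_n]$ standard graded. $\mathcal M_d$ is the set of monomials of degree $d$ in $S$, ordered lexicographically with $x_1>\cdots>x_n$; $|\mathcal M_d|=\binom{n+d-1}{d}$. For $u\geq_{lex}v$ in $\mathcal M_d$, $\mathcal L(u,v)=\{w\in\mathcal M_d: u\geq_{lex}w\geq_{lex}v\}$ and $\mathcal L^i(v)=\{w\in\mathcal M_d: w\geq_{lex} v\}$ (initial lexsegment); an initial lexsegment ideal is an ideal generated by some $\mathcal L^i(v)$. For a set $\mathcal L\subset\mathcal M_d$, its shadow is $\mathrm{Shad}(\mathcal L)=\{x_iw: w\in\mathcal L, 1\le i\le n\}\subset\mathcal M_{d+1}$, and iterated shadows are defined recursively. A lexsegment $\mathcal L$ is completely lexsegment if all its iterated shadows are lexsegments (of the corresponding degrees); $(\mathcal L)$ is then called a completely lexsegment ideal. A graded ideal $I$ generated in degree $d$ is Gotzmann if the number of minimal generators of $\mathfrak m I$ (i.e. $\dim_k I_{d+1}$, $\mathfrak m=(x_1,\ldots,x_n)$) equals $|\mathrm{Shad}(\mathcal L)|$, where $\mathcal L$ is the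 initial lexsegment of $\mathcal M_d$ with $|\mathcal L|=\dim_k I_d$; equivalently, $I$ and the ideal generated by $\mathcal L$ have the same Hilbert function. *)

theory Defs
  imports Main
begin

text \<open>Monomials in k[x_1,...,x_n] are represented by exponent vectors
  f :: nat \<Rightarrow> nat, where f (i-1) is the exponent of x_i (indices 0..n-1),
  and f i = 0 for i \<ge> n.\<close>

definition mons :: "nat \<Rightarrow> nat \<Rightarrow> (nat \<Rightarrow> nat) set" where
  "mons n d = {f. (\<forall>i\<ge>n. f i = 0) \<and> (\<Sum>i<n. f i) = d}"

definition lex_gt :: "nat \<Rightarrow> (nat \<Rightarrow> nat) \<Rightarrow> (nat \<Rightarrow> nat) \<Rightarrow> bool" where
  "lex_gt n u v = (\<exists>i<n. u i > v i \<and> (\<forall>k<i. u k = v k))"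

definition lex_ge :: "nat \<Rightarrow> (nat \<Rightarrow> nat) \<Rightarrow> (nat \<Rightarrow> nat) \<Rightarrow> bool" where
  "lex_ge n u v = (u = v \<or> lex_gt n u v)"

definition lexseg :: "nat \<Rightarrow> nat \<Rightarrow> (nat \<Rightarrow> nat) \<Rightarrow> (nat \<Rightarrow> nat) \<Rightarrow> (nat \<Rightarrow> nat) set" where
  "lexseg n d u v = {w \<in> mons n d. lex_ge n u w \<and> lex_ge n w v}"

definition init_lexseg :: "nat \<Rightarrow> nat \<Rightarrow> (nat \<Rightarrow> nat) \<Rightarrow> (nat \<Rightarrow> nat) set" where
  "init_lexseg n d v = {w \<in> mons n d. lex_ge n w v}"

definition shad :: "nat \<Rightarrow> (nat \<Rightarrow> nat) set \<Rightarrow> (nat \<Rightarrow> nat) set" where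
  "shad n L = {(\<lambda>k. w k + (if k = i then 1 else 0)) | w i. w \<in> L \<and> i < n}"

definition is_lexsegment :: "nat \<Rightarrow> nat \<Rightarrow> (nat \<Rightarrow> nat) set \<Rightarrow> bool" where
  "is_lexsegment n d A = (\<exists>u v. u \<in> mons n d \<and> v \<in> mons n d \<and> lex_ge n u v \<and> A = lexseg n d u v)"

definition completely_lexseg :: "nat \<Rightarrow> nat \<Rightarrow> (nat \<Rightarrow> nat) set \<Rightarrow> bool" where
  "completely_lexseg n d L = (\<forall>k. is_lexsegment n (d + k) ((shad n ^^ k) L))"

text \<open>The ideal generated by a set G of degree-d monomials is an initial lexsegment
  ideal iff G is an initial lexsegment (a monomial ideal generated in a single degree
  determines its minimal monomial generating set).\<close>
definition is_init_lexseg_set :: "nat \<Rightarrow> nat \<Rightarrow> (nat \<Rightarrow> nat) set \<Rightarrow> bool" where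
  "is_init_lexseg_set n d G = (\<exists>w \<in> mons n d. G = init_lexseg n d w)"

text \<open>Gotzmann property for the monomial ideal (G) generated in degree d:
  dim_k I_(d+1) = |Shad G| (the monomials of degree d+1 in I form a k-basis of I_(d+1))
  equals |Shad L| for the initial lexsegment L of M_d with |L| = |G|.\<close>
definition gotzmann_monideal :: "nat \<Rightarrow> nat \<Rightarrow> (nat \<Rightarrow> nat) set \<Rightarrow> bool" where
  "gotzmann_monideal n d G =
     (\<exists>w \<in> mons n d. card (init_lexseg n d w) = card G \<and>
        card (shad n G) = card (shad n (init_lexseg n d w)))"

end

theory Submission
  imports Defs
begin

(* Put p = #{w in M_d : w >lex u} and j = exponent of x_n in v.  Then
   |L(u,v)| = |L^i(v)| - p, and since Shad L(u,v) is a lexsegment it equals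
   L(x_1 u, x_n v), whose size is |L^i(x_n v)| - p.  Shadows of initial
   lexsegments are initial lexsegments: Shad L^i(w) = L^i(x_n w).
   The p monomials lying immediately above v are the monomials obtained from v
   by moving t < p factors x_n to x_{n-1}, provided p <= j.
   - If p <= j, the initial lexsegment ending at v' = (x_{n-1}/x_n)^p v has the
     size of L(u,v), and its shadow has the size of Shad L(u,v): I is Gotzmann.
   - If p > j, any initial lexsegment L^i(w) of the size of L(u,v) has
     w >lex s = (x_{n-1}/x_n)^j v; then x_n L^i(w), x_n (L^i(v) \ L^i(w)) and
     x_{n-1} s are disjoint inside L^i(x_n v), so Shad L^i(w) is too small.
   Finally |M_d \ L^i(u)| = binom(n+d-1,d) - (p+1) turns "p <= j" into the
   stated inequality.  Of the hypotheses on L(u,v) only two enter: its first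
   shadow is a lexsegment, and it is not initial (which forces n >= 2). *)

section \<open>The lexicographic order\<close>

lemma lex_gt_trans: "lex_gt n a b \<Longrightarrow> lex_gt n b c \<Longrightarrow> lex_gt n a c"
  unfolding lex_gt_def
proof (elim exE conjE)
  fix i k assume i: "i < n" "b i < a i" "\<forall>l<i. a l = b l"
    and k: "k < n" "c k < b k" "\<forall>l<k. b l = c l"
  show "\<exists>i<n. c i < a i \<and> (\<forall>k<i. a k = c k)"
  proof (cases i k rule: linorder_cases)
    case less then show ?thesis using i k by (intro exI[of _ i]) auto
  next
    case equal then show ?thesis using i k by (intro exI[of _ i]) auto
  next
    case greater then show ?thesis using i k by (intro exI[of _ k]) auto
  qed
qed

lemma lex_gt_irrefl: "\<not> lex_gt n a a"
  unfolding lex_gt_def by auto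

lemma lex_gt_asym: "lex_gt n a b \<Longrightarrow> \<not> lex_gt n b a"
  using lex_gt_trans lex_gt_irrefl by blast

lemma mons_zero: "a \<in> mons n d \<Longrightarrow> n \<le> k \<Longrightarrow> a k = 0"
  unfolding mons_def by auto

lemma mons_sum: "a \<in> mons n d \<Longrightarrow> (\<Sum>i<n. a i) = d"
  unfolding mons_def by auto

text \<open>The order is total on monomials (even of different degrees): two distinct
  exponent vectors first differ at some index below n.\<close>
lemma lex_gt_total:
  assumes "a \<in> mons n d" "b \<in> mons n e" "a \<noteq> b"
  shows "lex_gt n a b \<or> lex_gt n b a"
proof -
  have ex: "\<exists>k. a k \<noteq> b k" using assms(3) by auto
  define k where "k = (LEAST k. a k \<noteq> b k)"
  have k_differs: "a k \<noteq> b k" unfolding k_def by (rule LeastI_ex[OF ex])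
  have agree_before: "\<forall>l<k. a l = b l" unfolding k_def using not_less_Least by blast
  have "k < n"
    using k_differs mons_zero[OF assms(1), of k] mons_zero[OF assms(2), of k] by fastforce
  then show ?thesis
    using k_differs agree_before unfolding lex_gt_def
    by (cases "a k < b k") (auto intro!: exI[of _ k])
qed

lemma lex_ge_refl: "lex_ge n a a"
  unfolding lex_ge_def by simp

lemma lex_ge_trans: "lex_ge n a b \<Longrightarrow> lex_ge n b c \<Longrightarrow> lex_ge n a c"
  unfolding lex_ge_def using lex_gt_trans by blast

lemma lex_ge_antisym: "lex_ge n a b \<Longrightarrow> lex_ge n b a \<Longrightarrow> a = b"
  unfolding lex_ge_def using lex_gt_asym[of n a b] by auto

lemma not_lex_ge_iff:
  assumes "a \<in> mons n d" "b \<in> mons n e"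
  shows "\<not> lex_ge n a b \<longleftrightarrow> lex_gt n b a"
  using lex_gt_total[OF assms] lex_gt_asym[of n b a] lex_gt_irrefl[of n a]
  unfolding lex_ge_def by auto

lemma lex_between_prefix:
  assumes ay: "lex_ge n a y" and yb: "lex_ge n y b" and ab: "\<forall>k<m. a k = b k"
  shows "\<forall>k<m. y k = b k"
proof (rule ccontr)
  assume "\<not> (\<forall>k<m. y k = b k)"
  then have ex: "\<exists>k. k < m \<and> y k \<noteq> b k" by blast
  define k0 where "k0 = (LEAST k. k < m \<and> y k \<noteq> b k)"
  have k0: "k0 < m" "y k0 \<noteq> b k0" using LeastI_ex[OF ex] unfolding k0_def by auto
  have before: "y l = b l" if "l < k0" for l
    using not_less_Least[OF that[unfolded k0_def]] that k0(1) by simp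
  obtain i where i: "i < n" "b i < y i" "\<forall>l<i. y l = b l"
    using yb k0 unfolding lex_ge_def lex_gt_def by blast
  have "i = k0"
    using before[of i] i(2,3) k0(2) by (metis linorder_neqE_nat less_irrefl)
  then have y_above: "b k0 < y k0" using i(2) by simp
  have abk: "a k0 = b k0" using ab k0(1) by simp
  obtain i' where i': "i' < n" "y i' < a i'" "\<forall>l<i'. a l = y l"
    using ay abk k0(2) unfolding lex_ge_def lex_gt_def by auto
  consider "i' < k0" | "i' = k0" | "k0 < i'" by linarith
  then show False
  proof cases
    case 1 then show False using before[OF 1] ab i'(2) k0(1) by simp
  next
    case 2 then show False using i'(2) abk y_above by simp
  next
    case 3 then show False using i'(3) abk k0(2) by simp
  qed
qed

section \<open>Counting monomials\<close>

text \<open>|M_d| = binom(n+d-1, d), via the bijection with lists of length n summing to d.\<close>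
lemma card_mons:
  assumes "n \<ge> 1"
  shows "card (mons n d) = (n + d - 1) choose d" "finite (mons n d)"
proof -
  let ?L = "{l::nat list. size l = n \<and> sum_list l = d}"
  have sum_map: "sum_list (map f [0..<n]) = (\<Sum>k<n. f k)" for f :: "nat \<Rightarrow> nat"
    by (simp add: sum_set_upt_conv_sum_list_nat[symmetric] lessThan_atLeast0)
  have bij: "bij_betw (\<lambda>f. map f [0..<n]) (mons n d) ?L"
  proof (rule bij_betw_byWitness[where f' = "\<lambda>l i. if i < n then l ! i else 0"])
    show "\<forall>a\<in>mons n d. (\<lambda>i. if i < n then map a [0..<n] ! i else 0) = a"
      using mons_zero by fastforce
    show "\<forall>a'\<in>?L. map (\<lambda>i. if i < n then a' ! i else 0) [0..<n] = a'"
      by (auto intro: nth_equalityI)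
    show "(\<lambda>f. map f [0..<n]) ` mons n d \<subseteq> ?L"
      using sum_map mons_sum by auto
    show "(\<lambda>l i. if i < n then l ! i else 0) ` ?L \<subseteq> mons n d"
    proof
      fix g assume "g \<in> (\<lambda>l i. if i < n then l ! i else 0) ` ?L"
      then obtain l where l: "l \<in> ?L" "g = (\<lambda>i. if i < n then l ! i else 0)" by blast
      have "map g [0..<n] = l" using l by (auto intro: nth_equalityI)
      then have "(\<Sum>k<n. g k) = d" using sum_map[of g] l by simp
      then show "g \<in> mons n d" unfolding mons_def using l by auto
    qed
  qed
  have card_L: "card ?L = (d + n - 1) choose d" by (rule card_length_sum_list)
  then have "finite ?L" using assms card_ge_0_finite by force
  then show "finite (mons n d)" using bij_betw_finite[OF bij] by simp
  show "card (mons n d) = (n + d - 1) choose d"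
    using bij_betw_same_card[OF bij] card_L by (simp add: add.commute)
qed

lemma mons_one_variable: "a \<in> mons 1 d \<Longrightarrow> b \<in> mons 1 d \<Longrightarrow> a = b"
proof
  fix k assume a: "a \<in> mons 1 d" and b: "b \<in> mons 1 d"
  show "a k = b k"
    using mons_sum[OF a] mons_sum[OF b] mons_zero[OF a, of k] mons_zero[OF b, of k]
    by (cases "k = 0") auto
qed

lemma lexseg_one_variable:
  assumes "u \<in> mons 1 d" "v \<in> mons 1 d"
  shows "lexseg 1 d u v = init_lexseg 1 d v"
  using mons_one_variable[OF _ assms(1)] mons_one_variable[OF _ assms(2)] lex_ge_refl
  unfolding lexseg_def init_lexseg_def by blast

lemma tail_sum_eq:
  assumes "a \<in> mons n e" "b \<in> mons n e" "m \<le> n" "\<forall>k<m. a k = b k"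
  shows "(\<Sum>k\<in>{m..<n}. a k) = (\<Sum>k\<in>{m..<n}. b k)"
proof -
  have split: "(\<Sum>k<n. f k) = (\<Sum>k<m. f k) + (\<Sum>k\<in>{m..<n}. f k)" for f :: "nat \<Rightarrow> nat"
    using assms(3) by (metis atLeast0LessThan sum.atLeastLessThan_concat zero_le)
  have "(\<Sum>k<m. a k) = (\<Sum>k<m. b k)" using assms(4) by simp
  then show ?thesis using split[of a] split[of b] mons_sum[OF assms(1)] mons_sum[OF assms(2)]
    by linarith
qed

lemma mons_eq_by_prefix:
  assumes "a \<in> mons n e" "b \<in> mons n e" "i < n" "\<forall>k\<le>i. a k = b k" "\<forall>k>i. a k = 0"
  shows "a = b"
proof -
  have "(\<Sum>k\<in>{Suc i..<n}. b k) = (\<Sum>k\<in>{Suc i..<n}. a k)"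
    using tail_sum_eq[OF assms(2,1), of "Suc i"] assms(3,4) by (simp add: less_Suc_eq_le)
  also have "\<dots> = 0" using assms(5) by simp
  finally have "b k = 0" if "i < k" for k
    using that mons_zero[OF assms(2), of k] by (cases "k < n") auto
  then show ?thesis using assms(4,5) by (metis ext not_le)
qed

lemma last_two_sum_eq:
  assumes "a \<in> mons n e" "b \<in> mons n e" "2 \<le> n" "\<forall>k<n-2. a k = b k"
  shows "a (n-2) + a (n-1) = b (n-2) + b (n-1)"
proof -
  obtain m where m: "n = Suc (Suc m)" using assms(3) by (metis add_2_eq_Suc le_Suc_ex)
  have "(\<Sum>k\<in>{n-2..<n}. a k) = (\<Sum>k\<in>{n-2..<n}. b k)"
    using tail_sum_eq[OF assms(1,2), of "n-2"] assms(4) by simp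
  then show ?thesis using m by simp
qed

text \<open>mulvar w i is the monomial x_(i+1) * w (indices are 0-based).\<close>
definition mulvar :: "(nat \<Rightarrow> nat) \<Rightarrow> nat \<Rightarrow> (nat \<Rightarrow> nat)" where
  "mulvar w i = (\<lambda>k. w k + (if k = i then 1 else 0))"

lemma mulvar_same: "mulvar w i i = w i + 1"
  by (simp add: mulvar_def)

lemma mulvar_other: "k \<noteq> i \<Longrightarrow> mulvar w i k = w k"
  by (simp add: mulvar_def)

lemma shad_eq: "shad n L = {mulvar w i | w i. w \<in> L \<and> i < n}"
  unfolding shad_def mulvar_def by simp

lemma mulvar_inj: "mulvar a i = mulvar b i \<longleftrightarrow> a = b"
proof
  assume eq: "mulvar a i = mulvar b i"
  show "a = b"
  proof
    fix k
    have "mulvar a i k = mulvar b i k" by (simp add: eq)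
    then show "a k = b k" by (simp add: mulvar_def)
  qed
qed simp

lemma lex_gt_mulvar: "lex_gt n (mulvar a i) (mulvar b i) \<longleftrightarrow> lex_gt n a b"
  unfolding lex_gt_def mulvar_def by auto

lemma lex_ge_mulvar: "lex_ge n (mulvar a i) (mulvar b i) \<longleftrightarrow> lex_ge n a b"
  unfolding lex_ge_def using lex_gt_mulvar mulvar_inj by blast

lemma mulvar_mons_iff:
  assumes "i < n"
  shows "mulvar y i \<in> mons n (Suc d) \<longleftrightarrow> y \<in> mons n d"
proof -
  have "(\<Sum>k<n. mulvar y i k) = (\<Sum>k<n. y k) + 1"
    using assms unfolding mulvar_def by (simp add: sum.distrib)
  then show ?thesis using assms unfolding mons_def by (auto simp: mulvar_def)
qed

lemma mulvar_first_ge: "i < n \<Longrightarrow> lex_ge n (mulvar a 0) (mulvar a i)"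
  unfolding lex_ge_def lex_gt_def mulvar_def
  by (cases "i = 0") (auto intro!: exI[of _ 0])

lemma mulvar_ge_last: "i < n \<Longrightarrow> lex_ge n (mulvar a i) (mulvar a (n-1))"
  unfolding lex_ge_def lex_gt_def mulvar_def
  by (cases "i = n - 1") (auto intro!: exI[of _ i])

definition lex_above :: "nat \<Rightarrow> nat \<Rightarrow> (nat \<Rightarrow> nat) \<Rightarrow> (nat \<Rightarrow> nat) set" where
  "lex_above n e a = {z \<in> mons n e. lex_gt n z a}"

lemma init_lexseg_mono: "lex_ge n a b \<Longrightarrow> init_lexseg n e a \<subseteq> init_lexseg n e b"
  unfolding init_lexseg_def using lex_ge_trans by blast

lemma finite_init_lexseg: "finite (mons n e) \<Longrightarrow> finite (init_lexseg n e a)"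
  unfolding init_lexseg_def by simp

text \<open>L(a,b) = L^i(b) minus the monomials above a; hence the cardinality formula.\<close>
lemma card_lexseg:
  assumes a: "a \<in> mons n e" and b: "b \<in> mons n e" and ab: "lex_ge n a b"
    and fin: "finite (mons n e)"
  shows "card (lexseg n e a b) + card (lex_above n e a) = card (init_lexseg n e b)"
proof -
  have diff: "lexseg n e a b = init_lexseg n e b - lex_above n e a"
    unfolding lexseg_def init_lexseg_def lex_above_def using not_lex_ge_iff[OF a] by auto
  have sub: "lex_above n e a \<subseteq> init_lexseg n e b"
    unfolding lex_above_def init_lexseg_def using ab lex_ge_trans[of n _ a b]
    by (auto simp: lex_ge_def)
  have "finite (init_lexseg n e b)" using finite_init_lexseg[OF fin] .
  then show ?thesis unfolding diff
    using card_Diff_subset[OF _ sub] card_mono[OF _ sub] finite_subset[OF sub] by simp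
qed

text \<open>L^i(u) consists of u and the monomials above it, so its complement in M_d
  has binom(n+d-1,d) - 1 - |above u| elements.\<close>
lemma card_below:
  assumes n1: "n \<ge> 1" and u: "u \<in> mons n d"
  shows "card (mons n d - init_lexseg n d u) + card (lex_above n d u) + 1 = (n + d - 1) choose d"
proof -
  have fin: "finite (mons n d)" using card_mons(2)[OF n1] .
  have init_u: "init_lexseg n d u = insert u (lex_above n d u)"
    unfolding init_lexseg_def lex_above_def lex_ge_def using u by auto
  have "u \<notin> lex_above n d u" unfolding lex_above_def using lex_gt_irrefl by blast
  moreover have "finite (lex_above n d u)" using fin unfolding lex_above_def by simp
  ultimately have card_init: "card (init_lexseg n d u) = card (lex_above n d u) + 1"
    unfolding init_u by simp
  have sub: "init_lexseg n d u \<subseteq> mons n d" unfolding init_lexseg_def by auto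
  show ?thesis
    using card_Diff_subset[OF finite_subset[OF sub fin] sub] card_mono[OF fin sub]
      card_init card_mons(1)[OF n1] by simp
qed

lemma lex_above_mulvar_first:
  assumes "n \<ge> 1" "u \<in> mons n d"
  shows "lex_above n (Suc d) (mulvar u 0) = (\<lambda>y. mulvar y 0) ` lex_above n d u"
proof (intro equalityI subsetI)
  fix z assume "z \<in> lex_above n (Suc d) (mulvar u 0)"
  then have z: "z \<in> mons n (Suc d)" "lex_gt n z (mulvar u 0)" unfolding lex_above_def by auto
  have "mulvar u 0 0 \<le> z 0"
    using z(2) unfolding lex_gt_def by (metis less_or_eq_imp_le neq0_conv)
  then have z0: "z 0 \<ge> 1" by (simp add: mulvar_def)
  define y where "y = (\<lambda>k. z k - (if k = 0 then 1 else 0))"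
  have zy: "mulvar y 0 = z" using z0 by (auto simp: mulvar_def y_def)
  have "y \<in> mons n d" using mulvar_mons_iff[of 0 n y d] assms(1) z(1) zy by simp
  moreover have "lex_gt n y u" using z(2) zy lex_gt_mulvar[of n y 0 u] by simp
  ultimately show "z \<in> (\<lambda>y. mulvar y 0) ` lex_above n d u" using zy unfolding lex_above_def by blast
next
  fix z assume "z \<in> (\<lambda>y. mulvar y 0) ` lex_above n d u"
  then show "z \<in> lex_above n (Suc d) (mulvar u 0)"
    using assms(1) mulvar_mons_iff[of 0 n] lex_gt_mulvar unfolding lex_above_def by auto
qed

lemma card_lex_above_mulvar_first:
  assumes "n \<ge> 1" "u \<in> mons n d"
  shows "card (lex_above n (Suc d) (mulvar u 0)) = card (lex_above n d u)"
  unfolding lex_above_mulvar_first[OF assms]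
  by (rule card_image) (simp add: inj_on_def mulvar_inj)

section \<open>Shadows of lexsegments\<close>

text \<open>If the shadow of L(u,v) is a lexsegment, then it is L(x_1 u, x_n v): these are
  its largest and smallest elements.\<close>
lemma shad_lexseg:
  assumes n1: "n \<ge> 1" and u: "u \<in> mons n d" and v: "v \<in> mons n d" and uv: "lex_ge n u v"
    and seg: "is_lexsegment n (Suc d) (shad n (lexseg n d u v))"
  shows "shad n (lexseg n d u v) = lexseg n (Suc d) (mulvar u 0) (mulvar v (n-1))"
proof -
  let ?L = "lexseg n d u v"
  obtain a b where ab: "a \<in> mons n (Suc d)" "b \<in> mons n (Suc d)" "lex_ge n a b"
      "shad n ?L = lexseg n (Suc d) a b"
    using seg unfolding is_lexsegment_def by blast
  have bounds: "lex_ge n (mulvar u 0) z \<and> lex_ge n z (mulvar v (n-1))" if z: "z \<in> shad n ?L" for z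
  proof -
    obtain w i where wi: "z = mulvar w i" "w \<in> ?L" "i < n" using z unfolding shad_eq by blast
    have w: "lex_ge n u w" "lex_ge n w v" using wi(2) unfolding lexseg_def by auto
    have "lex_ge n (mulvar u 0) (mulvar w 0)" using w(1) lex_ge_mulvar by simp
    moreover have "lex_ge n (mulvar w 0) (mulvar w i)" using mulvar_first_ge[OF wi(3)] .
    moreover have "lex_ge n (mulvar w i) (mulvar w (n-1))" using mulvar_ge_last[OF wi(3)] .
    moreover have "lex_ge n (mulvar w (n-1)) (mulvar v (n-1))" using w(2) lex_ge_mulvar by simp
    ultimately show ?thesis using wi(1) lex_ge_trans by metis
  qed
  have "u \<in> ?L" "v \<in> ?L" using u v uv lex_ge_refl unfolding lexseg_def by auto
  moreover have "0 < n" "n - 1 < n" using n1 by auto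
  ultimately have ends: "mulvar u 0 \<in> shad n ?L" "mulvar v (n-1) \<in> shad n ?L"
    unfolding shad_eq by blast+
  have "a \<in> shad n ?L" "b \<in> shad n ?L"
    using ab lex_ge_refl unfolding lexseg_def by auto
  moreover have "lex_ge n a (mulvar u 0)" "lex_ge n (mulvar v (n-1)) b"
    using ends ab(4) unfolding lexseg_def by auto
  ultimately have "a = mulvar u 0" "b = mulvar v (n-1)"
    using bounds[of a] bounds[of b] lex_ge_antisym[of n a "mulvar u 0"]
      lex_ge_antisym[of n b "mulvar v (n-1)"] by auto
  then show ?thesis using ab(4) by simp
qed

lemma card_shad_lexseg:
  assumes n1: "n \<ge> 1" and u: "u \<in> mons n d" and v: "v \<in> mons n d" and uv: "lex_ge n u v"
    and seg: "is_lexsegment n (Suc d) (shad n (lexseg n d u v))"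
  shows "card (shad n (lexseg n d u v)) + card (lex_above n d u)
           = card (init_lexseg n (Suc d) (mulvar v (n-1)))"
proof -
  have idx: "0 < n" "n - 1 < n" using n1 by auto
  have "lex_ge n (mulvar u 0) (mulvar v 0)" using uv lex_ge_mulvar by simp
  then have "lex_ge n (mulvar u 0) (mulvar v (n-1))"
    using mulvar_first_ge[OF idx(2)] lex_ge_trans by blast
  moreover have "mulvar u 0 \<in> mons n (Suc d)" "mulvar v (n-1) \<in> mons n (Suc d)"
    using mulvar_mons_iff[OF idx(1)] mulvar_mons_iff[OF idx(2)] u v by auto
  ultimately show ?thesis
    using card_lexseg[of "mulvar u 0" n "Suc d" "mulvar v (n-1)"] card_mons(2)[OF n1]
      shad_lexseg[OF assms] card_lex_above_mulvar_first[OF n1 u] by simp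
qed

lemma shad_init_lexseg_sub:
  assumes "n \<ge> 1" "w \<in> mons n d"
  shows "shad n (init_lexseg n d w) \<subseteq> init_lexseg n (Suc d) (mulvar w (n-1))"
proof
  fix z assume "z \<in> shad n (init_lexseg n d w)"
  then obtain y i where yi: "z = mulvar y i" "y \<in> init_lexseg n d w" "i < n"
    unfolding shad_eq by blast
  have y: "y \<in> mons n d" "lex_ge n y w" using yi(2) unfolding init_lexseg_def by auto
  have "z \<in> mons n (Suc d)" using yi(1,3) y(1) mulvar_mons_iff by simp
  moreover have "lex_ge n z (mulvar w (n-1))"
    using yi(1) mulvar_ge_last[OF yi(3), of y] y(2) lex_ge_mulvar[of n y "n-1" w] lex_ge_trans
    by metis
  ultimately show "z \<in> init_lexseg n (Suc d) (mulvar w (n-1))" unfolding init_lexseg_def by simp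
qed

lemma last_variable_factor:
  assumes z: "z \<in> mons n (Suc d)"
  obtains i y where "i < n" "y \<in> mons n d" "z = mulvar y i" "\<forall>k>i. z k = 0"
proof -
  define S where "S = {k. k < n \<and> 0 < z k}"
  have finS: "finite S" unfolding S_def by simp
  have "S \<noteq> {}"
  proof
    assume "S = {}"
    then have "(\<Sum>k<n. z k) = 0" unfolding S_def by auto
    then show False using mons_sum[OF z] by simp
  qed
  define i where "i = Max S"
  have "i \<in> S" unfolding i_def using Max_in[OF finS \<open>S \<noteq> {}\<close>] .
  then have i: "i < n" "0 < z i" unfolding S_def by auto
  have after_i: "z k = 0" if "i < k" for k
  proof (cases "k < n")
    case True
    then show ?thesis using that Max_ge[OF finS, of k] unfolding i_def S_def by fastforce
  qed (use mons_zero[OF z, of k] in simp)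
  define y where "y = (\<lambda>k. z k - (if k = i then 1 else 0))"
  have zy: "z = mulvar y i" using i(2) by (auto simp: mulvar_def y_def)
  then have "y \<in> mons n d" using mulvar_mons_iff[of i n y d] i(1) z by simp
  then show ?thesis using i(1) zy after_i by (intro that) auto
qed

text \<open>Conversely, if z >= x_n w and z = x_i y with x_i the last variable of z, then y >= w.\<close>
lemma shad_init_lexseg_sup:
  assumes n1: "n \<ge> 1" and w: "w \<in> mons n d"
  shows "init_lexseg n (Suc d) (mulvar w (n-1)) \<subseteq> shad n (init_lexseg n d w)"
proof
  fix z assume "z \<in> init_lexseg n (Suc d) (mulvar w (n-1))"
  then have z: "z \<in> mons n (Suc d)" "lex_ge n z (mulvar w (n-1))" unfolding init_lexseg_def by auto
  obtain i y where i: "i < n" and ym: "y \<in> mons n d" and zy: "z = mulvar y i"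
    and after_i: "\<forall>k>i. z k = 0"
    using last_variable_factor[OF z(1)] by blast
  have yk: "y k = z k" if "k \<noteq> i" for k using that zy by (simp add: mulvar_other)
  have y_after: "\<forall>k>i. y k = 0"
  proof (intro allI impI)
    fix k assume "i < k"
    then show "y k = 0" using after_i yk[of k] by simp
  qed
  have "lex_ge n y w"
  proof (cases "z = mulvar w (n-1)")
    case True
    then have "z (n-1) \<noteq> 0" by (simp add: mulvar_same)
    then have "\<not> i < n - 1" using after_i by (metis diff_le_self le_neq_implies_less)
    then have "i = n - 1" using i by simp
    then have "mulvar y (n-1) = mulvar w (n-1)" using zy True by simp
    then have "y = w" by (simp add: mulvar_inj)
    then show ?thesis using lex_ge_refl by simp
  next
    case False
    then obtain k where k: "k < n" "mulvar w (n-1) k < z k" "\<forall>l<k. z l = mulvar w (n-1) l"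
      using z(2) unfolding lex_ge_def lex_gt_def by blast
    have "k \<le> i"
    proof (rule ccontr)
      assume "\<not> k \<le> i"
      then have "z k = 0" using after_i by simp
      then show False using k(2) by simp
    qed
    have prefix: "\<forall>l<k. y l = w l"
    proof (intro allI impI)
      fix l assume "l < k"
      then have "l \<noteq> i" "l \<noteq> n - 1" using \<open>k \<le> i\<close> i by auto
      then show "y l = w l" using k(3) \<open>l < k\<close> yk by (simp add: mulvar_other)
    qed
    consider "k < i" | "k = i" "i = n - 1" | "k = i" "i \<noteq> n - 1"
      using \<open>k \<le> i\<close> by linarith
    then show ?thesis
    proof cases
      case 1
      then have "w k < y k" using k(2) yk[of k] i mulvar_other[of k "n-1" w] by simp
      then show ?thesis using prefix k(1) unfolding lex_ge_def lex_gt_def by blast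
    next
      case 2
      then have "w k < y k" using k(2) zy by (simp add: mulvar_same)
      then show ?thesis using prefix k(1) unfolding lex_ge_def lex_gt_def by blast
    next
      case 3
      then have "w i \<le> y i" using k(2) zy by (simp add: mulvar_same mulvar_other)
      show ?thesis
      proof (cases "w i < y i")
        case True
        then show ?thesis using prefix 3 i unfolding lex_ge_def lex_gt_def by blast
      next
        case False
        then have "y i = w i" using \<open>w i \<le> y i\<close> by simp
        then have "\<forall>l\<le>i. y l = w l" using prefix 3 by (auto simp: le_less)
        then have "y = w" using mons_eq_by_prefix[OF ym w i] y_after by blast
        then show ?thesis using lex_ge_refl by simp
      qed
    qed
  qed
  then have "y \<in> init_lexseg n d w" using ym unfolding init_lexseg_def by simp
  then show "z \<in> shad n (init_lexseg n d w)" unfolding shad_eq using zy i by blast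
qed

lemma shad_init_lexseg:
  assumes "n \<ge> 1" "w \<in> mons n d"
  shows "shad n (init_lexseg n d w) = init_lexseg n (Suc d) (mulvar w (n-1))"
  using shad_init_lexseg_sub[OF assms] shad_init_lexseg_sup[OF assms] by blast

section \<open>Trading factors x_n for x_(n-1)\<close>

text \<open>shift_last n v t = (x_(n-1)/x_n)^t v, defined for t up to the exponent of x_n in v.\<close>
definition shift_last :: "nat \<Rightarrow> (nat \<Rightarrow> nat) \<Rightarrow> nat \<Rightarrow> (nat \<Rightarrow> nat)" where
  "shift_last n v t = v(n-2 := v (n-2) + t, n-1 := v (n-1) - t)"

lemma shift_last_vals:
  assumes "2 \<le> n"
  shows "shift_last n v t (n-2) = v (n-2) + t" "shift_last n v t (n-1) = v (n-1) - t"
    "k \<noteq> n-2 \<Longrightarrow> k \<noteq> n-1 \<Longrightarrow> shift_last n v t k = v k"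
  using assms unfolding shift_last_def by auto

lemma shift_last_mons:
  assumes n2: "2 \<le> n" and v: "v \<in> mons n e" and t: "t \<le> v (n-1)"
  shows "shift_last n v t \<in> mons n e"
proof -
  obtain m where m: "n = Suc (Suc m)" using n2 by (metis add_2_eq_Suc le_Suc_ex)
  have "(\<Sum>k<m. shift_last n v t k) = (\<Sum>k<m. v k)"
    using m shift_last_vals(3)[OF n2] by (intro sum.cong) auto
  then have "(\<Sum>k<n. shift_last n v t k) = (\<Sum>k<n. v k)"
    using m shift_last_vals(1,2)[OF n2, of v t] t by simp
  moreover have "shift_last n v t k = 0" if "n \<le> k" for k
    using that n2 shift_last_vals(3)[OF n2, of k v t] mons_zero[OF v that] by simp
  ultimately show ?thesis using mons_sum[OF v] unfolding mons_def by simp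
qed

lemma shift_last_gt:
  assumes n2: "2 \<le> n" and st: "s < t"
  shows "lex_gt n (shift_last n v t) (shift_last n v s)"
  unfolding lex_gt_def
  using n2 st shift_last_vals[OF n2] by (intro exI[of _ "n-2"]) auto

lemma shift_last_ge: "2 \<le> n \<Longrightarrow> lex_ge n (shift_last n v t) v"
  using shift_last_gt[of n 0 t v] unfolding lex_ge_def shift_last_def
  by (cases "t = 0") auto

text \<open>The monomials between v (inclusive) and (x_(n-1)/x_n)^p v (exclusive) are exactly
  the shifts of v by t < p: they agree with v outside the last two variables.\<close>
lemma between_shift_last:
  assumes n2: "2 \<le> n" and v: "v \<in> mons n e" and p: "p \<le> v (n-1)"
  shows "{y \<in> mons n e. lex_ge n y v \<and> lex_gt n (shift_last n v p) y} = shift_last n v ` {..<p}"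
proof (intro equalityI subsetI)
  fix y assume "y \<in> shift_last n v ` {..<p}"
  then obtain t where t: "t < p" "y = shift_last n v t" by blast
  then show "y \<in> {y \<in> mons n e. lex_ge n y v \<and> lex_gt n (shift_last n v p) y}"
    using shift_last_mons[OF n2 v] shift_last_ge[OF n2] shift_last_gt[OF n2 t(1)] p by simp
next
  fix y assume "y \<in> {y \<in> mons n e. lex_ge n y v \<and> lex_gt n (shift_last n v p) y}"
  then have y: "y \<in> mons n e" "lex_ge n y v" "lex_gt n (shift_last n v p) y" by auto
  define s where "s = shift_last n v p"
  have sm: "s \<in> mons n e" unfolding s_def using shift_last_mons[OF n2 v p] .
  have sv: "\<forall>k<n-2. s k = v k" unfolding s_def using shift_last_vals(3)[OF n2] by simp
  have "lex_ge n s y" using y(3) unfolding s_def lex_ge_def by simp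
  then have agree: "\<forall>k<n-2. y k = v k" using lex_between_prefix[OF _ y(2) sv] by blast
  have last_two_v: "y (n-2) + y (n-1) = v (n-2) + v (n-1)"
    using last_two_sum_eq[OF y(1) v n2 agree] .
  have last_two_s: "y (n-2) + y (n-1) = s (n-2) + s (n-1)"
    using last_two_sum_eq[OF y(1) sm n2] agree sv by simp
  have lo: "v (n-2) \<le> y (n-2)"
  proof (cases "y = v")
    case False
    then obtain i where i: "i < n" "v i < y i" "\<forall>l<i. y l = v l"
      using y(2) unfolding lex_ge_def lex_gt_def by blast
    have "\<not> i < n - 2" using agree i(2) by auto
    then consider "i = n - 2" | "n - 2 < i" using i(1) by linarith
    then show ?thesis using i(2,3) by cases auto
  qed simp
  have hi: "y (n-2) < v (n-2) + p"
  proof -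
    obtain i where i: "i < n" "y i < s i" "\<forall>l<i. s l = y l"
      using y(3) unfolding s_def lex_gt_def by blast
    have "\<not> i < n - 2" using agree sv i(2) by auto
    then consider "i = n - 2" | "i = n - 1" using i(1) by linarith
    then show ?thesis
    proof cases
      case 1 then show ?thesis using i(2) shift_last_vals(1)[OF n2] unfolding s_def by simp
    next
      case 2
      then have "y (n-2) = s (n-2)" "y (n-1) < s (n-1)" using i(2,3) n2 by auto
      then show ?thesis using last_two_s shift_last_vals(1)[OF n2] unfolding s_def by simp
    qed
  qed
  define t where "t = y (n-2) - v (n-2)"
  have "y = shift_last n v t"
  proof
    fix k
    consider "k = n - 2" | "k = n - 1" | "k < n - 2" | "n \<le> k" using n2 by linarith
    then show "y k = shift_last n v t k"
    proof cases
      case 1 then show ?thesis using shift_last_vals(1)[OF n2, of v t] lo unfolding t_def by simp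
    next
      case 2 then show ?thesis
        using shift_last_vals(2)[OF n2, of v t] lo last_two_v unfolding t_def by (simp, arith)
    next
      case 3 then show ?thesis using agree shift_last_vals(3)[OF n2, of k v t] by simp
    next
      case 4 then show ?thesis
        using shift_last_vals(3)[OF n2, of k v t] mons_zero[OF y(1) 4] mons_zero[OF v 4] n2 by simp
    qed
  qed
  moreover have "t < p" using lo hi unfolding t_def by simp
  ultimately show "y \<in> shift_last n v ` {..<p}" by blast
qed

lemma card_init_lexseg_shift_last:
  assumes n2: "2 \<le> n" and v: "v \<in> mons n e" and p: "p \<le> v (n-1)" and fin: "finite (mons n e)"
  shows "card (init_lexseg n e v) = card (init_lexseg n e (shift_last n v p)) + p"
proof -
  let ?s = "shift_last n v p"
  have sm: "?s \<in> mons n e" using shift_last_mons[OF n2 v p] .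
  have sub: "init_lexseg n e ?s \<subseteq> init_lexseg n e v"
    using init_lexseg_mono[OF shift_last_ge[OF n2]] .
  have "init_lexseg n e v - init_lexseg n e ?s
          = {y \<in> mons n e. lex_ge n y v \<and> lex_gt n ?s y}"
    unfolding init_lexseg_def using not_lex_ge_iff[OF _ sm] by auto
  then have diff: "init_lexseg n e v - init_lexseg n e ?s = shift_last n v ` {..<p}"
    using between_shift_last[OF n2 v p] by simp
  have "inj_on (shift_last n v) {..<p}"
    by (rule inj_onI) (metis shift_last_vals(1)[OF n2] add_left_cancel)
  then have "card (init_lexseg n e v - init_lexseg n e ?s) = p"
    unfolding diff by (simp add: card_image)
  moreover have "finite (init_lexseg n e v)" using finite_init_lexseg[OF fin] .
  ultimately show ?thesis
    using card_Diff_subset[OF _ sub] card_mono[OF _ sub] finite_subset[OF sub] by fastforce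
qed

lemma mulvar_shift_last:
  assumes n2: "2 \<le> n" and p: "p \<le> v (n-1)"
  shows "mulvar (shift_last n v p) (n-1) = shift_last n (mulvar v (n-1)) p"
proof
  fix k
  have "n - 2 \<noteq> n - 1" using n2 by simp
  then show "mulvar (shift_last n v p) (n-1) k = shift_last n (mulvar v (n-1)) p k"
    using p unfolding shift_last_def mulvar_def by auto
qed

section \<open>The Gotzmann criterion for L(u,v)\<close>

lemma lex_gt_mulvar_last_penultimate:
  assumes n2: "2 \<le> n" and w: "w \<in> mons n e" and s: "s \<in> mons n e" and s0: "s (n-1) = 0"
    and gt: "lex_gt n w s"
  shows "lex_gt n (mulvar w (n-1)) (mulvar s (n-2))"
proof -
  obtain k where k: "k < n" "s k < w k" "\<forall>l<k. w l = s l" using gt unfolding lex_gt_def by blast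
  consider "k < n - 2" | "k = n - 2" | "k = n - 1" using k(1) n2 by linarith
  then show ?thesis
  proof cases
    case 1
    then show ?thesis unfolding lex_gt_def using k mulvar_other
      by (intro exI[of _ k]) auto
  next
    case 2
    then have "w (n-2) + w (n-1) = s (n-2) + s (n-1)" using last_two_sum_eq[OF w s n2] k(3) by simp
    then show ?thesis using k(2) 2 s0 by simp
  next
    case 3
    then show ?thesis using k(2) s0 last_two_sum_eq[OF w s n2] k(3) n2 by simp
  qed
qed

text \<open>If p <= j, the initial lexsegment ending at (x_(n-1)/x_n)^p v witnesses the
  Gotzmann property for any set L with the sizes of L(u,v) and of its shadow.\<close>
lemma gotzmann_of_small_gap:
  assumes n2: "2 \<le> n" and v: "v \<in> mons n d" and p: "p \<le> v (n-1)"
    and card_L: "card L + p = card (init_lexseg n d v)"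
    and card_shad: "card (shad n L) + p = card (init_lexseg n (Suc d) (mulvar v (n-1)))"
  shows "gotzmann_monideal n d L"
proof -
  have n1: "n \<ge> 1" using n2 by simp
  let ?w = "shift_last n v p"
  let ?v' = "mulvar v (n-1)"
  have w: "?w \<in> mons n d" using shift_last_mons[OF n2 v p] .
  have v': "?v' \<in> mons n (Suc d)" using mulvar_mons_iff[of "n-1" n v d] n1 v by simp
  have "card (init_lexseg n d ?w) = card L"
    using card_init_lexseg_shift_last[OF n2 v p card_mons(2)[OF n1]] card_L by simp
  moreover have "card (shad n (init_lexseg n d ?w)) = card (shad n L)"
  proof -
    have "shad n (init_lexseg n d ?w) = init_lexseg n (Suc d) (shift_last n ?v' p)"
      using shad_init_lexseg[OF n1 w] mulvar_shift_last[of n p v, OF n2 p] by simp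
    moreover have "p \<le> ?v' (n-1)" using p by (simp add: mulvar_same)
    ultimately show ?thesis
      using card_init_lexseg_shift_last[OF n2 v' _ card_mons(2)[OF n1]] card_shad by simp
  qed
  ultimately show ?thesis unfolding gotzmann_monideal_def using w by metis
qed

text \<open>The counting core of the converse: for w >lex s = (x_(n-1)/x_n)^j v (j the exponent
  of x_n in v), the sets x_n L^i(w), x_n (L^i(v) \ L^i(w)) and {x_(n-1) s} are disjoint
  subsets of L^i(x_n v).\<close>
lemma shadow_deficit:
  assumes n2: "2 \<le> n" and v: "v \<in> mons n d" and w: "w \<in> mons n d"
    and ws: "lex_gt n w (shift_last n v (v (n-1)))"
  shows "card (init_lexseg n (Suc d) (mulvar w (n-1)))
           + card (init_lexseg n d v - init_lexseg n d w) + 1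
         \<le> card (init_lexseg n (Suc d) (mulvar v (n-1)))"
proof -
  have n1: "n \<ge> 1" using n2 by simp
  have idx: "n - 1 < n" "n - 2 < n" "n - 2 \<noteq> n - 1" using n2 by auto
  have fin: "finite (mons n d)" "finite (mons n (Suc d))" using card_mons(2)[OF n1] by auto
  define s where "s = shift_last n v (v (n-1))"
  define A where "A = init_lexseg n (Suc d) (mulvar w (n-1))"
  define B where "B = (\<lambda>y. mulvar y (n-1)) ` (init_lexseg n d v - init_lexseg n d w)"
  define z where "z = mulvar s (n-2)"
  let ?V = "init_lexseg n (Suc d) (mulvar v (n-1))"
  have sm: "s \<in> mons n d" unfolding s_def using shift_last_mons[OF n2 v] by simp
  have s0: "s (n-1) = 0" unfolding s_def using shift_last_vals(2)[OF n2] by simp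
  have wv: "lex_ge n w v"
    using ws shift_last_ge[OF n2, of v] lex_ge_trans unfolding s_def lex_ge_def by blast
  have "A \<subseteq> ?V" unfolding A_def using init_lexseg_mono wv lex_ge_mulvar by blast
  moreover have "B \<subseteq> ?V"
    unfolding B_def init_lexseg_def using mulvar_mons_iff[OF idx(1)] lex_ge_mulvar by auto
  moreover have "z \<in> ?V"
  proof -
    have "z \<in> mons n (Suc d)" unfolding z_def using mulvar_mons_iff[OF idx(2)] sm by simp
    moreover have "lex_gt n z (mulvar v (n-1))"
      unfolding lex_gt_def z_def s_def using n2 idx(3) shift_last_vals[OF n2]
      by (intro exI[of _ "n-2"]) (auto simp: mulvar_def)
    ultimately show ?thesis unfolding init_lexseg_def lex_ge_def by simp
  qed
  ultimately have sub: "A \<union> B \<union> {z} \<subseteq> ?V" by blast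
  have "A \<inter> B = {}"
    unfolding A_def B_def init_lexseg_def using lex_ge_mulvar by auto
  moreover have "z \<notin> A"
  proof
    assume "z \<in> A"
    moreover have "lex_gt n (mulvar w (n-1)) z"
      unfolding z_def using lex_gt_mulvar_last_penultimate[OF n2 w sm s0] ws s_def by simp
    moreover have "z \<in> mons n (Suc d)" "mulvar w (n-1) \<in> mons n (Suc d)"
      unfolding z_def using mulvar_mons_iff[OF idx(2)] mulvar_mons_iff[OF idx(1)] sm w by auto
    ultimately show False unfolding A_def init_lexseg_def using not_lex_ge_iff by blast
  qed
  moreover have "z \<notin> B"
  proof
    assume "z \<in> B"
    then obtain y where "z = mulvar y (n-1)" unfolding B_def by blast
    then have "z (n-1) \<noteq> 0" by (simp add: mulvar_same)
    moreover have "z (n-1) = 0" unfolding z_def using s0 idx(3) by (simp add: mulvar_other)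
    ultimately show False by simp
  qed
  moreover have "finite A" "finite B"
    unfolding A_def B_def using finite_init_lexseg fin by auto
  ultimately have "card (A \<union> B \<union> {z}) = card A + card B + 1"
    by (simp add: card_Un_disjoint)
  moreover have "card B = card (init_lexseg n d v - init_lexseg n d w)"
    unfolding B_def by (rule card_image) (simp add: inj_on_def mulvar_inj)
  ultimately show ?thesis
    using card_mono[OF finite_init_lexseg[OF fin(2)] sub] unfolding A_def by simp
qed

lemma not_gotzmann_of_large_gap:
  assumes n2: "2 \<le> n" and v: "v \<in> mons n d" and p: "v (n-1) < p"
    and card_L: "card L + p = card (init_lexseg n d v)"
    and card_shad: "card (shad n L) + p = card (init_lexseg n (Suc d) (mulvar v (n-1)))"
  shows "\<not> gotzmann_monideal n d L"
proof
  assume "gotzmann_monideal n d L"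
  then obtain w where w: "w \<in> mons n d" and card_w: "card (init_lexseg n d w) = card L"
    and shad_w: "card (shad n L) = card (shad n (init_lexseg n d w))"
    unfolding gotzmann_monideal_def by blast
  have n1: "n \<ge> 1" using n2 by simp
  have fin: "finite (mons n d)" using card_mons(2)[OF n1] .
  let ?s = "shift_last n v (v (n-1))"
  have card_s: "card (init_lexseg n d v) = card (init_lexseg n d ?s) + v (n-1)"
    using card_init_lexseg_shift_last[OF n2 v _ fin] by simp
  have ws: "lex_gt n w ?s"
  proof (rule ccontr)
    assume "\<not> lex_gt n w ?s"
    then have "lex_ge n ?s w"
      using not_lex_ge_iff[OF shift_last_mons[OF n2 v order_refl] w] by simp
    then have "card (init_lexseg n d ?s) \<le> card (init_lexseg n d w)"
      by (intro card_mono finite_init_lexseg fin init_lexseg_mono)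
    then show False using card_w card_L card_s p by simp
  qed
  then have "lex_ge n w v"
    using shift_last_ge[OF n2, of v] lex_ge_trans unfolding lex_ge_def by blast
  then have "init_lexseg n d w \<subseteq> init_lexseg n d v" by (rule init_lexseg_mono)
  then have "card (init_lexseg n d v - init_lexseg n d w) = p"
    using card_Diff_subset[OF finite_init_lexseg[OF fin]] card_w card_L by simp
  then show False
    using shadow_deficit[OF n2 v w ws] shad_init_lexseg[OF n1 w] shad_w card_shad by simp
qed

theorem mainTheorem4:
  fixes n d :: nat and u v :: "nat \<Rightarrow> nat"
  assumes "d \<ge> 2"
    and "u \<in> mons n d" and "v \<in> mons n d" and "lex_ge n u v"
    and "u 0 \<ge> 1"
    and "completely_lexseg n d (lexseg n d u v)"
    and "\<not> is_init_lexseg_set n d (lexseg n d u v)"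
  shows "gotzmann_monideal n d (lexseg n d u v) \<longleftrightarrow>
         int (card (mons n d - init_lexseg n d u)) \<ge> int (n + d - 1 choose d) - (int (v (n - 1)) + 1)"
proof -
  note u = assms(2) and v = assms(3) and uv = assms(4)
  let ?L = "lexseg n d u v" and ?p = "card (lex_above n d u)"
  have "n \<noteq> 0" using mons_sum[OF u] assms(1) by (metis lessThan_0 sum.empty not_numeral_le_zero)
  moreover have "n \<noteq> 1"
    using assms(7) lexseg_one_variable u v unfolding is_init_lexseg_set_def by blast
  ultimately have n2: "2 \<le> n" by simp
  then have n1: "n \<ge> 1" by simp
  have card_L: "card ?L + ?p = card (init_lexseg n d v)"
    using card_lexseg[OF u v uv card_mons(2)[OF n1]] .
  have "is_lexsegment n (d + 1) ((shad n ^^ 1) ?L)"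
    using assms(6) unfolding completely_lexseg_def by blast
  then have card_shad: "card (shad n ?L) + ?p = card (init_lexseg n (Suc d) (mulvar v (n-1)))"
    using card_shad_lexseg[OF n1 u v uv] by simp
  have "gotzmann_monideal n d ?L \<longleftrightarrow> ?p \<le> v (n-1)"
    using gotzmann_of_small_gap[OF n2 v _ card_L card_shad]
      not_gotzmann_of_large_gap[OF n2 v _ card_L card_shad] by (meson not_le)
  moreover have "card (mons n d - init_lexseg n d u) + ?p + 1 = (n + d - 1) choose d"
    using card_below[OF n1 u] .
  ultimately show ?thesis by linarith
qed

end
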